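(* Fix integers $k\ge 1$ and a real $\Delta>0$. For $n\ge k$ let $m=m(n)=\lfloor \Delta n\rfloor$ and let $V=(V_1,\dots,V_m)\sim\mathbf{P}_{\text{unif}}$. Then there is a sequence $\epsilon_n\to 0$ (as $n\to\infty$, depending only on $k$ and $\Delta$) such that for all $n\ge k$, $$\frac{\mathbf{E}[Z(V)^2]}{\mathbf{E}[Z(V)]^2}\le 1+\epsilon_n+\frac{1}{\mathbf{E}[Z(V)]}.$$
   Context: A $k$-flat of $\mathbb{F}_2^n$ is an affine subspace of dimension $n-k$; equivalently a set $\{x\in\mathbb{F}_2^n : \ell_i(x)=\varepsilon_i \ \forall i\in[k]\}$ where $\ell_1,\dots,\ell_k$ are linearly independent linear forms on $\mathbb{F}_2^n$ and $\varepsilon_1,\dots,\varepsilon_k\in\mathbb{F}_2$. Let $q_0$ be the uniform distribution on the set of all $k$-flats of $\mathbb{F}_2^n$, and $\mathbf{P}_{\text{unif}}:=q_0^{\otimes m}$ (i.e. $V_1,\dots,V_m$ i.i.d. uniform $k$-flats). For $V=(V_1,\dots,V_m)$, let $\mathcal{S}(V)=\mathbb{F}_2^n\setminus\bigcup_{j=1}^m V_j$ and $Z(V)=|\mathcal{S}(V)|$. Expectations are under $\mathbf{P}_{\text{unif}}$. *)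

theory Defs
  imports "HOL-Probability.Probability"
begin

text \<open>Points of F_2^n are boolean lists of length n (True = 1, False = 0).\<close>
definition cube :: "nat \<Rightarrow> bool list set" where
  "cube n = {x. length x = n}"

definition lform :: "nat \<Rightarrow> bool list \<Rightarrow> bool list \<Rightarrow> bool" where
  "lform n a x = odd (card {j. j < n \<and> a ! j \<and> x ! j})"

text \<open>Linear independence over F_2 of the forms a 0, ..., a (k-1) in F_2^n:
  no nonempty subfamily sums to zero (coefficients in F_2 are 0 or 1).\<close>
definition lin_indep_F2 :: "nat \<Rightarrow> nat \<Rightarrow> (nat \<Rightarrow> bool list) \<Rightarrow> bool" where
  "lin_indep_F2 n k a \<longleftrightarrow>
     (\<forall>S. S \<subseteq> {..<k} \<longrightarrow> S \<noteq> {} \<longrightarrow> (\<exists>j<n. odd (card {i\<in>S. a i ! j})))"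

definition flats :: "nat \<Rightarrow> nat \<Rightarrow> bool list set set" where
  "flats n k = {{x \<in> cube n. \<forall>i<k. lform n (a i) x = e i} | a e.
                  (\<forall>i<k. a i \<in> cube n) \<and> lin_indep_F2 n k a}"

definition P_unif :: "nat \<Rightarrow> nat \<Rightarrow> nat \<Rightarrow> (nat \<Rightarrow> bool list set) pmf" where
  "P_unif n k m = Pi_pmf {..<m} {} (\<lambda>_. pmf_of_set (flats n k))"

definition Zcount :: "nat \<Rightarrow> nat \<Rightarrow> (nat \<Rightarrow> bool list set) \<Rightarrow> nat" where
  "Zcount n m V = card (cube n - (\<Union>j<m. V j))"

end

theory Submission
  imports Defs
begin

text \<open>
  All k-flats of F_2^n have s = 2^(n-k) points, and translations and transvections preserve the
  family of k-flats while acting transitively on ordered pairs of distinct points. Double counting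
  incidences then shows that a uniform k-flat contains two given distinct points with probability
  s(s-1)/(N(N-1)) \<le> (s/N)^2, where N = 2^n. Hence the events "x is not covered" and "y is not
  covered" are negatively correlated for one flat and, by independence, for m flats; summing over
  pairs of points gives E[Z^2] \<le> E[Z] + E[Z]^2.
\<close>

section \<open>Parity and linear forms over F_2\<close>

definition parity :: "'a set \<Rightarrow> ('a \<Rightarrow> bool) \<Rightarrow> bool" where
  "parity S f \<longleftrightarrow> odd (card {i\<in>S. f i})"

lemma parity_empty [simp]: "\<not> parity {} f"
  by (simp add: parity_def)

lemma parity_insert:
  assumes "finite S" "x \<notin> S"
  shows "parity (insert x S) f \<longleftrightarrow> parity S f \<noteq> f x"
proof (cases "f x")
  case True
  then have "{i\<in>insert x S. f i} = insert x {i\<in>S. f i}" by auto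
  with True assms show ?thesis by (simp add: parity_def)
next
  case False
  then have "{i\<in>insert x S. f i} = {i\<in>S. f i}" by auto
  with False show ?thesis by (simp add: parity_def)
qed

lemma parity_xor: "finite S \<Longrightarrow> parity S (\<lambda>i. f i \<noteq> g i) \<longleftrightarrow> parity S f \<noteq> parity S g"
  by (induction S rule: finite_induct) (auto simp: parity_insert)

lemma parity_conj_const: "finite S \<Longrightarrow> parity S (\<lambda>i. f i \<and> c) \<longleftrightarrow> parity S f \<and> c"
  by (induction S rule: finite_induct) (auto simp: parity_insert)

lemma parity_singleton_indicator: "finite S \<Longrightarrow> parity S (\<lambda>l. l = j \<and> c) \<longleftrightarrow> j \<in> S \<and> c"
  by (induction S rule: finite_induct) (auto simp: parity_insert)

lemma parity_cong: "(\<And>i. i \<in> S \<Longrightarrow> f i = g i) \<Longrightarrow> parity S f = parity S g"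
  unfolding parity_def by (metis (mono_tags, lifting) Collect_cong)

lemma lform_eq_parity: "lform n a x = parity {..<n} (\<lambda>j. a!j \<and> x!j)"
  by (simp add: lform_def parity_def lessThan_def)

lemma lin_indep_F2_iff_parity:
  "lin_indep_F2 n k a \<longleftrightarrow>
     (\<forall>S. S \<subseteq> {..<k} \<longrightarrow> S \<noteq> {} \<longrightarrow> (\<exists>j<n. parity S (\<lambda>i. a i ! j)))"
  by (simp add: lin_indep_F2_def parity_def)

lemma mem_cube [simp]: "x \<in> cube n \<longleftrightarrow> length x = n"
  by (simp add: cube_def)

lemma finite_cube [simp]: "finite (cube n)"
  using finite_lists_length_eq[of "UNIV :: bool set" n] by (simp add: cube_def)

lemma card_cube: "card (cube n) = 2 ^ n"
  using card_lists_length_eq[of "UNIV :: bool set" n] by (simp add: cube_def)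

definition vadd :: "bool list \<Rightarrow> bool list \<Rightarrow> bool list" where
  "vadd x y = map2 (\<noteq>) x y"

definition zero_vec :: "nat \<Rightarrow> bool list" where
  "zero_vec n = replicate n False"

definition unit_vec :: "nat \<Rightarrow> nat \<Rightarrow> bool list" where
  "unit_vec n j = (replicate n False)[j := True]"

definition transv :: "nat \<Rightarrow> nat \<Rightarrow> bool list \<Rightarrow> bool list" where
  "transv i j x = x[j := (x!j \<noteq> x!i)]"

lemma length_vadd [simp]: "length (vadd x y) = min (length x) (length y)"
  by (simp add: vadd_def)

lemma nth_vadd [simp]: "j < length x \<Longrightarrow> j < length y \<Longrightarrow> vadd x y ! j = (x!j \<noteq> y!j)"
  by (simp add: vadd_def)

lemma vadd_vadd_cancel: "length x = length b \<Longrightarrow> vadd (vadd x b) b = x"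
  by (intro nth_equalityI) auto

lemma vadd_eq_zero_vec_iff: "length x = n \<Longrightarrow> length y = n \<Longrightarrow> vadd x y = zero_vec n \<longleftrightarrow> x = y"
  by (auto simp: zero_vec_def list_eq_iff_nth_eq)

lemma zero_vec_vadd: "length x = n \<Longrightarrow> vadd (zero_vec n) x = x"
  by (intro nth_equalityI) (auto simp: zero_vec_def)

lemma length_zero_vec [simp]: "length (zero_vec n) = n"
  by (simp add: zero_vec_def)

lemma length_unit_vec [simp]: "length (unit_vec n j) = n"
  by (simp add: unit_vec_def)

lemma length_transv [simp]: "length (transv i j x) = length x"
  by (simp add: transv_def)

lemma transv_transv: "i \<noteq> j \<Longrightarrow> transv i j (transv i j x) = x"
proof (cases "j < length x")
  case True
  moreover have "((x!j \<noteq> x!i) \<noteq> x!i) = x!j" by auto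
  moreover assume "i \<noteq> j"
  ultimately show ?thesis by (simp add: transv_def del: not_iff)
qed (simp add: transv_def list_update_beyond)

lemma transv_zero_vec: "i < n \<Longrightarrow> transv i j (zero_vec n) = zero_vec n"
  by (cases "j < n") (auto simp: transv_def zero_vec_def list_update_beyond list_update_same_conv)

lemma lform_vadd_right:
  assumes "length x = n" "length y = n"
  shows "lform n a (vadd x y) \<longleftrightarrow> lform n a x \<noteq> lform n a y"
proof -
  have "lform n a (vadd x y) = parity {..<n} (\<lambda>j. (a!j \<and> x!j) \<noteq> (a!j \<and> y!j))"
    unfolding lform_eq_parity using assms by (intro parity_cong) auto
  then show ?thesis
    using parity_xor[of "{..<n}" "\<lambda>j. a!j \<and> x!j" "\<lambda>j. a!j \<and> y!j"] by (simp add: lform_eq_parity)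
qed

lemma lform_vadd_left:
  assumes "length a = n" "length b = n"
  shows "lform n (vadd a b) x \<longleftrightarrow> lform n a x \<noteq> lform n b x"
proof -
  have "lform n (vadd a b) x = parity {..<n} (\<lambda>j. (a!j \<and> x!j) \<noteq> (b!j \<and> x!j))"
    unfolding lform_eq_parity using assms by (intro parity_cong) auto
  then show ?thesis
    using parity_xor[of "{..<n}" "\<lambda>j. a!j \<and> x!j" "\<lambda>j. b!j \<and> x!j"] by (simp add: lform_eq_parity)
qed

lemma lform_unit_vec: "j < n \<Longrightarrow> lform n a (unit_vec n j) = a!j"
proof -
  assume j: "j < n"
  then have "lform n a (unit_vec n j) = parity {..<n} (\<lambda>l. l = j \<and> a!j)"
    unfolding lform_eq_parity unit_vec_def by (intro parity_cong) (auto simp: nth_list_update)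
  with j show ?thesis by (simp add: parity_singleton_indicator)
qed

lemma lform_transv:
  assumes "i \<noteq> j" "i < n" "j < n" "length a = n" "length y = n"
  shows "lform n a (transv i j y) = lform n (transv j i a) y"
proof -
  have "lform n a (transv i j y) = parity {..<n} (\<lambda>l. (a!l \<and> y!l) \<noteq> (l = j \<and> a!j \<and> y!i))"
    unfolding lform_eq_parity transv_def using assms by (intro parity_cong) (auto simp: nth_list_update)
  also have "\<dots> \<longleftrightarrow> parity {..<n} (\<lambda>l. a!l \<and> y!l) \<noteq> (a!j \<and> y!i)"
    using parity_xor[of "{..<n}" "\<lambda>l. a!l \<and> y!l" "\<lambda>l. l = j \<and> a!j \<and> y!i"]
      parity_singleton_indicator[of "{..<n}" j "a!j \<and> y!i"] assms by simp
  also have "\<dots> \<longleftrightarrow> parity {..<n} (\<lambda>l. (a!l \<and> y!l) \<noteq> (l = i \<and> a!j \<and> y!i))"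
    using parity_xor[of "{..<n}" "\<lambda>l. a!l \<and> y!l" "\<lambda>l. l = i \<and> a!j \<and> y!i"]
      parity_singleton_indicator[of "{..<n}" i "a!j \<and> y!i"] assms by simp
  also have "\<dots> = lform n (transv j i a) y"
    unfolding lform_eq_parity transv_def using assms by (intro parity_cong) (auto simp: nth_list_update)
  finally show ?thesis .
qed

section \<open>Solvability of independent linear systems\<close>

text \<open>One step of Gaussian elimination on the last form, with pivot column j.\<close>
lemma lin_indep_F2_eliminate:
  assumes ind: "lin_indep_F2 n (Suc k) a" and len: "\<forall>i<Suc k. length (a i) = n"
    and pivot: "a k ! j"
  shows "lin_indep_F2 n k (\<lambda>i. if a i ! j then vadd (a i) (a k) else a i)"
  unfolding lin_indep_F2_iff_parity
proof (intro allI impI)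
  fix S assume S: "S \<subseteq> {..<k}" "S \<noteq> {}"
  have fS: "finite S" using S finite_subset by blast
  have "k \<notin> S" using S by auto
  define c where "c = parity S (\<lambda>i. a i ! j)"
  define S' where "S' = (if c then insert k S else S)"
  have "S' \<subseteq> {..<Suc k}" "S' \<noteq> {}" using S by (auto simp: S'_def)
  then obtain l where l: "l < n" "parity S' (\<lambda>i. a i ! l)"
    using ind by (auto simp: lin_indep_F2_iff_parity)
  have "parity S (\<lambda>i. (if a i ! j then vadd (a i) (a k) else a i) ! l)
      = parity S (\<lambda>i. a i ! l \<noteq> (a i ! j \<and> a k ! l))"
    using S l len by (intro parity_cong) auto
  also have "\<dots> \<longleftrightarrow> parity S (\<lambda>i. a i ! l) \<noteq> (c \<and> a k ! l)"
    using parity_xor[OF fS, of "\<lambda>i. a i ! l" "\<lambda>i. a i ! j \<and> a k ! l"]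
      parity_conj_const[OF fS, of "\<lambda>i. a i ! j" "a k ! l"] by (simp add: c_def)
  also have "\<dots> \<longleftrightarrow> parity S' (\<lambda>i. a i ! l)"
    using parity_insert[OF fS \<open>k \<notin> S\<close>] by (simp add: S'_def)
  finally have "parity S (\<lambda>i. (if a i ! j then vadd (a i) (a k) else a i) ! l)"
    using l(2) by simp
  with l(1) show "\<exists>l<n. parity S (\<lambda>i. (if a i ! j then vadd (a i) (a k) else a i) ! l)"
    by blast
qed

lemma lform_system_solvable:
  "lin_indep_F2 n k a \<Longrightarrow> \<forall>i<k. length (a i) = n \<Longrightarrow> \<exists>x\<in>cube n. \<forall>i<k. lform n (a i) x = t i"
proof (induction k arbitrary: a t)
  case 0
  show ?case by (intro bexI[of _ "zero_vec n"]) auto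
next
  case (Suc k)
  obtain j where j: "j < n" "parity {k} (\<lambda>i. a i ! j)"
    using Suc.prems(1) unfolding lin_indep_F2_iff_parity by (drule_tac spec[of _ "{k}"]) auto
  then have pivot: "a k ! j" by (simp add: parity_insert)
  define a' where "a' i = (if a i ! j then vadd (a i) (a k) else a i)" for i
  define t' where "t' i = (if a i ! j then t i \<noteq> t k else t i)" for i
  have len: "length (a i) = n" if "i < Suc k" for i using Suc.prems(2) that by blast
  have "lin_indep_F2 n k a'"
    unfolding a'_def by (rule lin_indep_F2_eliminate[OF Suc.prems pivot])
  moreover have "\<forall>i<k. length (a' i) = n" using len by (simp add: a'_def)
  ultimately obtain x' where x': "length x' = n" "\<forall>i<k. lform n (a' i) x' = t' i"
    using Suc.IH[of a' t'] by auto
  define x where "x = (if lform n (a k) x' = t k then x' else vadd x' (unit_vec n j))"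
  have x_len: "length x = n" using x' by (simp add: x_def)
  have a'_j: "\<not> a' i ! j" if "i < k" for i using len[of i] len[of k] that j pivot by (simp add: a'_def)
  have last: "lform n (a k) x = t k"
    using pivot x' j by (auto simp: x_def lform_vadd_right lform_unit_vec)
  have reduced: "lform n (a' i) x = t' i" if "i < k" for i
    using x' that a'_j[OF that] j by (auto simp: x_def lform_vadd_right lform_unit_vec)
  have earlier: "lform n (a i) x = t i" if "i < k" for i
  proof (cases "a i ! j")
    case True
    then have "lform n (a' i) x \<longleftrightarrow> lform n (a i) x \<noteq> lform n (a k) x"
      using len[of i] len[of k] that by (simp add: a'_def lform_vadd_left)
    with reduced[OF that] last True show ?thesis by (auto simp: t'_def)
  next
    case False
    with reduced[OF that] show ?thesis by (simp add: a'_def t'_def)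
  qed
  show ?case
    using x_len last earlier by (intro bexI[of _ x]) (auto simp: less_Suc_eq)
qed

section \<open>Flats\<close>

definition flat :: "nat \<Rightarrow> nat \<Rightarrow> (nat \<Rightarrow> bool list) \<Rightarrow> (nat \<Rightarrow> bool) \<Rightarrow> bool list set" where
  "flat n k a e = {x \<in> cube n. \<forall>i<k. lform n (a i) x = e i}"

lemma flats_eq: "flats n k = {flat n k a e | a e. (\<forall>i<k. length (a i) = n) \<and> lin_indep_F2 n k a}"
  by (simp add: flats_def flat_def)

lemma flat_subset_cube: "flat n k a e \<subseteq> cube n"
  by (auto simp: flat_def)

lemma flat_in_flats: "\<forall>i<k. length (a i) = n \<Longrightarrow> lin_indep_F2 n k a \<Longrightarrow> flat n k a e \<in> flats n k"
  unfolding flats_eq by blast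

lemma finite_flat: "finite (flat n k a e)"
  by (rule finite_subset[OF flat_subset_cube finite_cube])

lemma flats_subset_cube: "V \<in> flats n k \<Longrightarrow> V \<subseteq> cube n"
  by (auto simp: flats_eq flat_def)

lemma finite_flats: "finite (flats n k)"
proof (rule finite_subset)
  show "flats n k \<subseteq> Pow (cube n)" using flats_subset_cube by blast
qed simp

lemma inj_on_vadd: "inj_on (\<lambda>x. vadd x b) {x. length x = length b}"
  by (rule inj_onI) (metis mem_Collect_eq vadd_vadd_cancel)

lemma vadd_image_flat:
  assumes "length b = n"
  shows "(\<lambda>x. vadd x b) ` flat n k a e = flat n k a (\<lambda>i. e i \<noteq> lform n (a i) b)"
proof
  show "(\<lambda>x. vadd x b) ` flat n k a e \<subseteq> flat n k a (\<lambda>i. e i \<noteq> lform n (a i) b)"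
    using assms by (auto simp: flat_def lform_vadd_right)
  show "flat n k a (\<lambda>i. e i \<noteq> lform n (a i) b) \<subseteq> (\<lambda>x. vadd x b) ` flat n k a e"
  proof
    fix y assume y: "y \<in> flat n k a (\<lambda>i. e i \<noteq> lform n (a i) b)"
    then have "vadd y b \<in> flat n k a e" using assms by (auto simp: flat_def lform_vadd_right)
    moreover have "y = vadd (vadd y b) b" using y assms by (simp add: flat_def vadd_vadd_cancel)
    ultimately show "y \<in> (\<lambda>x. vadd x b) ` flat n k a e" by blast
  qed
qed

lemma flat_cong: "(\<And>i. i < k \<Longrightarrow> e i = e' i) \<Longrightarrow> flat n k a e = flat n k a e'"
  by (simp add: flat_def)

lemma card_flat_eq:
  assumes "lin_indep_F2 n k a" "\<forall>i<k. length (a i) = n"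
  shows "card (flat n k a e') = card (flat n k a e)"
proof -
  obtain b where "b \<in> cube n" and b: "\<forall>i<k. lform n (a i) b = (e i \<noteq> e' i)"
    using lform_system_solvable[OF assms, where t = "\<lambda>i. e i \<noteq> e' i"] by blast
  then have len_b: "length b = n" by simp
  have "(\<lambda>x. vadd x b) ` flat n k a e = flat n k a (\<lambda>i. e i \<noteq> lform n (a i) b)"
    by (rule vadd_image_flat[OF len_b])
  also have "\<dots> = flat n k a e'"
    using b by (intro flat_cong) auto
  finally have image: "(\<lambda>x. vadd x b) ` flat n k a e = flat n k a e'" .
  have "flat n k a e \<subseteq> {x. length x = length b}"
    using len_b flat_subset_cube by fastforce
  then have "inj_on (\<lambda>x. vadd x b) (flat n k a e)"
    by (rule inj_on_subset[OF inj_on_vadd])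
  then show ?thesis by (simp add: card_image flip: image)
qed

text \<open>For fixed forms a, the flats flat n k a e with e ranging over {..<k} \<rightarrow> bool partition
  the cube.\<close>
lemma card_flat:
  assumes "lin_indep_F2 n k a" "\<forall>i<k. length (a i) = n"
  shows "2 ^ k * card (flat n k a e) = 2 ^ n"
proof -
  define E where "E = PiE {..<k} (\<lambda>_. UNIV :: bool set)"
  have cube_eq: "cube n = (\<Union>e'\<in>E. flat n k a e')"
  proof
    show "cube n \<subseteq> (\<Union>e'\<in>E. flat n k a e')"
    proof
      fix x assume "x \<in> cube n"
      then have "x \<in> flat n k a (restrict (\<lambda>i. lform n (a i) x) {..<k})" by (simp add: flat_def)
      moreover have "restrict (\<lambda>i. lform n (a i) x) {..<k} \<in> E" by (simp add: E_def)
      ultimately show "x \<in> (\<Union>e'\<in>E. flat n k a e')" by blast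
    qed
  qed (auto simp: flat_def)
  have disjoint: "flat n k a e1 \<inter> flat n k a e2 = {}" if "e1 \<in> E" "e2 \<in> E" "e1 \<noteq> e2" for e1 e2
  proof -
    have "\<exists>i<k. e1 i \<noteq> e2 i"
    proof (rule ccontr)
      assume "\<not> (\<exists>i<k. e1 i \<noteq> e2 i)"
      then have "e1 = e2" using that(1,2) unfolding E_def by (intro PiE_ext) auto
      with that(3) show False ..
    qed
    then show ?thesis by (auto simp: flat_def)
  qed
  have "2 ^ n = card (\<Union>e'\<in>E. flat n k a e')" by (simp add: card_cube flip: cube_eq)
  also have "\<dots> = (\<Sum>e'\<in>E. card (flat n k a e'))"
    using disjoint by (intro card_UN_disjoint) (auto simp: E_def finite_flat finite_PiE)
  also have "\<dots> = (\<Sum>e'\<in>E. card (flat n k a e))"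
    using card_flat_eq[OF assms] by (rule sum.cong[OF refl])
  also have "\<dots> = 2 ^ k * card (flat n k a e)" by (simp add: E_def card_PiE)
  finally show ?thesis by simp
qed
lemma card_flats_member: "V \<in> flats n k \<Longrightarrow> 2 ^ k * card V = 2 ^ n"
  by (auto simp: flats_eq card_flat)

lemma flats_nonempty: "k \<le> n \<Longrightarrow> flats n k \<noteq> {}"
proof -
  assume "k \<le> n"
  then have "lin_indep_F2 n k (unit_vec n)"
    unfolding lin_indep_F2_iff_parity
  proof (intro allI impI)
    fix S assume S: "S \<subseteq> {..<k}" "S \<noteq> {}"
    then obtain j where j: "j \<in> S" by blast
    with S \<open>k \<le> n\<close> have "j < n" by auto
    with S j \<open>k \<le> n\<close> have "{i\<in>S. unit_vec n i ! j} = {j}"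
      by (auto simp: unit_vec_def nth_list_update split: if_splits)
    then have "parity S (\<lambda>i. unit_vec n i ! j)" by (simp add: parity_def)
    with \<open>j < n\<close> show "\<exists>j<n. parity S (\<lambda>i. unit_vec n i ! j)" by blast
  qed
  then have "flat n k (unit_vec n) (\<lambda>_. False) \<in> flats n k" by (simp add: flat_in_flats)
  then show ?thesis by blast
qed

lemma flats_vadd_closed:
  assumes "length b = n" "V \<in> flats n k"
  shows "(\<lambda>x. vadd x b) ` V \<in> flats n k"
proof -
  obtain a e where "V = flat n k a e" "\<forall>i<k. length (a i) = n" "lin_indep_F2 n k a"
    using assms(2) by (auto simp: flats_eq)
  moreover from this(1) have "(\<lambda>x. vadd x b) ` V = flat n k a (\<lambda>i. e i \<noteq> lform n (a i) b)"
    using vadd_image_flat[OF assms(1)] by simp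
  ultimately show ?thesis by (simp add: flat_in_flats)
qed
lemma lin_indep_F2_transv:
  assumes ij: "i \<noteq> j" "i < n" "j < n"
    and ind: "lin_indep_F2 n k a" and len: "\<forall>r<k. length (a r) = n"
  shows "lin_indep_F2 n k (\<lambda>r. transv j i (a r))"
  unfolding lin_indep_F2_iff_parity
proof (intro allI impI)
  fix S assume S: "S \<subseteq> {..<k}" "S \<noteq> {}"
  have fS: "finite S" using S finite_subset by blast
  obtain l0 where l0: "l0 < n" "parity S (\<lambda>r. a r ! l0)"
    using ind S by (auto simp: lin_indep_F2_iff_parity)
  have column: "parity S (\<lambda>r. transv j i (a r) ! l) \<longleftrightarrow>
      (if l = i then parity S (\<lambda>r. a r ! i) \<noteq> parity S (\<lambda>r. a r ! j) else parity S (\<lambda>r. a r ! l))"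
    if "l < n" for l
  proof -
    have "parity S (\<lambda>r. transv j i (a r) ! l) = parity S (\<lambda>r. if l = i then a r ! i \<noteq> a r ! j else a r ! l)"
      using S len that ij by (intro parity_cong) (auto simp: transv_def nth_list_update)
    then show ?thesis using parity_xor[OF fS, of "\<lambda>r. a r ! i" "\<lambda>r. a r ! j"] by auto
  qed
  show "\<exists>l<n. parity S (\<lambda>r. transv j i (a r) ! l)"
  proof (cases "l0 = i")
    case False
    then show ?thesis using l0 column by auto
  next
    case True
    then show ?thesis using l0 column[of i] column[of j] ij
      by (cases "parity S (\<lambda>r. a r ! j)") auto
  qed
qed

lemma transv_image_flat:
  assumes ij: "i \<noteq> j" "i < n" "j < n" and len: "\<forall>r<k. length (a r) = n"
  shows "transv i j ` flat n k a e = flat n k (\<lambda>r. transv j i (a r)) e"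
proof -
  have lform_eq: "lform n (transv j i (a r)) y = lform n (a r) (transv i j y)" if "r < k" "length y = n" for r y
    using lform_transv[OF ij] len that by simp
  show ?thesis
  proof
    show "transv i j ` flat n k a e \<subseteq> flat n k (\<lambda>r. transv j i (a r)) e"
      using lform_eq transv_transv[OF ij(1)] by (auto simp: flat_def)
    show "flat n k (\<lambda>r. transv j i (a r)) e \<subseteq> transv i j ` flat n k a e"
    proof
      fix y assume y: "y \<in> flat n k (\<lambda>r. transv j i (a r)) e"
      then have "transv i j y \<in> flat n k a e" using lform_eq by (auto simp: flat_def)
      moreover have "y = transv i j (transv i j y)" using transv_transv[OF ij(1)] by simp
      ultimately show "y \<in> transv i j ` flat n k a e" by blast
    qed
  qed
qed

lemma flats_transv_closed:
  assumes "i \<noteq> j" "i < n" "j < n" "V \<in> flats n k"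
  shows "transv i j ` V \<in> flats n k"
proof -
  obtain a e where V: "V = flat n k a e" and a: "\<forall>r<k. length (a r) = n" "lin_indep_F2 n k a"
    using assms(4) by (auto simp: flats_eq)
  then have "transv i j ` V = flat n k (\<lambda>r. transv j i (a r)) e"
    using transv_image_flat[OF assms(1-3) a(1)] by simp
  moreover have "\<forall>r<k. length (transv j i (a r)) = n" using a(1) by simp
  ultimately show ?thesis
    using lin_indep_F2_transv[OF assms(1-3) a(2,1)] by (simp add: flat_in_flats)
qed

section \<open>Incidences of flats with pairs of points\<close>

lemma card_containing_pair_involution:
  assumes g_closed: "\<And>x. x \<in> C \<Longrightarrow> g x \<in> C" and g_invol: "\<And>x. x \<in> C \<Longrightarrow> g (g x) = x"
    and F_sub: "\<And>V. V \<in> F \<Longrightarrow> V \<subseteq> C" and F_closed: "\<And>V. V \<in> F \<Longrightarrow> g ` V \<in> F"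
    and "x \<in> C" "y \<in> C"
  shows "card {V\<in>F. g x \<in> V \<and> g y \<in> V} = card {V\<in>F. x \<in> V \<and> y \<in> V}"
proof -
  have image_invol: "g ` g ` V = V" if "V \<in> F" for V
  proof -
    have "\<forall>z\<in>V. g (g z) = z" using F_sub[OF that] g_invol by blast
    then show ?thesis by (simp add: image_image cong: image_cong)
  qed
  have "bij_betw (image g) {V\<in>F. x \<in> V \<and> y \<in> V} {V\<in>F. g x \<in> V \<and> g y \<in> V}"
  proof (rule bij_betw_byWitness[where f' = "image g"])
    show "image g ` {V\<in>F. x \<in> V \<and> y \<in> V} \<subseteq> {V\<in>F. g x \<in> V \<and> g y \<in> V}"
      using F_closed by blast
    show "image g ` {V\<in>F. g x \<in> V \<and> g y \<in> V} \<subseteq> {V\<in>F. x \<in> V \<and> y \<in> V}"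
    proof
      fix W' assume "W' \<in> image g ` {V\<in>F. g x \<in> V \<and> g y \<in> V}"
      then obtain W where W: "W \<in> F" "g x \<in> W" "g y \<in> W" and W': "W' = g ` W" by blast
      have "x \<in> W'" "y \<in> W'"
        using W W' g_invol \<open>x \<in> C\<close> \<open>y \<in> C\<close> by (metis image_eqI)+
      with F_closed[OF W(1)] W' show "W' \<in> {V\<in>F. x \<in> V \<and> y \<in> V}" by blast
    qed
  qed (use image_invol in auto)
  then show ?thesis by (simp add: bij_betw_same_card)
qed

definition pair_count :: "nat \<Rightarrow> nat \<Rightarrow> bool list \<Rightarrow> bool list \<Rightarrow> nat" where
  "pair_count n k x y = card {V \<in> flats n k. x \<in> V \<and> y \<in> V}"

lemma pair_count_vadd:
  assumes "length b = n" "length x = n" "length y = n"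
  shows "pair_count n k (vadd x b) (vadd y b) = pair_count n k x y"
  unfolding pair_count_def
  using assms flats_subset_cube flats_vadd_closed
  by (intro card_containing_pair_involution[where C = "cube n"]) (auto simp: vadd_vadd_cancel)

lemma pair_count_transv:
  assumes "i \<noteq> j" "i < n" "j < n" "length x = n" "length y = n"
  shows "pair_count n k (transv i j x) (transv i j y) = pair_count n k x y"
  unfolding pair_count_def
  using assms flats_subset_cube flats_transv_closed
  by (intro card_containing_pair_involution[where C = "cube n"]) (auto simp: transv_transv)

lemma pair_count_diag: "length x = n \<Longrightarrow> pair_count n k x x = pair_count n k (zero_vec n) (zero_vec n)"
  using pair_count_vadd[of x n "zero_vec n" "zero_vec n" k] by (simp add: zero_vec_vadd)

lemma pair_count_shift_to_zero:
  assumes "length x = n" "length y = n"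
  shows "pair_count n k x y = pair_count n k (zero_vec n) (vadd x y)"
proof -
  have "vadd (vadd x y) x = y" using assms by (intro nth_equalityI) auto
  then show ?thesis
    using pair_count_vadd[of x n "zero_vec n" "vadd x y" k] assms by (simp add: zero_vec_vadd)
qed

lemma pair_count_unit_vec:
  assumes "i < n"
  shows "pair_count n k (zero_vec n) (unit_vec n i) = pair_count n k (zero_vec n) (unit_vec n 0)"
proof (cases "i = 0")
  case False
  define d where "d = (unit_vec n i)[0 := True]"
  have "transv i 0 (unit_vec n i) = d"
    using assms False by (intro nth_equalityI) (auto simp: transv_def d_def unit_vec_def nth_list_update)
  moreover have "transv 0 i d = unit_vec n 0"
    using assms False by (intro nth_equalityI) (auto simp: transv_def d_def unit_vec_def nth_list_update)
  moreover have "length d = n" by (simp add: d_def)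
  ultimately show ?thesis
    using pair_count_transv[of i 0 n "zero_vec n" "unit_vec n i" k]
      pair_count_transv[of 0 i n "zero_vec n" d k] assms False
    by (simp add: transv_zero_vec)
qed simp

text \<open>Transvections clear the support of a nonzero vector down to a single coordinate.\<close>
lemma pair_count_zero_nonzero:
  assumes "length d = n" "d \<noteq> zero_vec n"
  shows "pair_count n k (zero_vec n) d = pair_count n k (zero_vec n) (unit_vec n 0)"
  using assms
proof (induction "card {l. l < n \<and> d ! l}" arbitrary: d rule: less_induct)
  case less
  obtain i where i: "i < n" "d ! i"
    using less.prems by (auto simp: zero_vec_def list_eq_iff_nth_eq)
  show ?case
  proof (cases "\<exists>j<n. j \<noteq> i \<and> d ! j")
    case True
    then obtain j where j: "j < n" "j \<noteq> i" "d ! j" by blast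
    define d' where "d' = transv i j d"
    have d': "d' = d[j := False]" using i j by (simp add: d'_def transv_def)
    have support: "{l. l < n \<and> d' ! l} = {l. l < n \<and> d ! l} - {j}"
      using less.prems(1) j by (auto simp: d' nth_list_update)
    have "card {l. l < n \<and> d' ! l} < card {l. l < n \<and> d ! l}"
      unfolding support using j by (intro card_Diff1_less) auto
    moreover have "length d' = n" "d' \<noteq> zero_vec n"
      using less.prems(1) i j by (auto simp: d' zero_vec_def list_eq_iff_nth_eq nth_list_update)
    ultimately have "pair_count n k (zero_vec n) d' = pair_count n k (zero_vec n) (unit_vec n 0)"
      by (rule less.hyps)
    moreover have "pair_count n k (zero_vec n) d' = pair_count n k (zero_vec n) d"
      using pair_count_transv[of i j n "zero_vec n" d k] i j less.prems(1)
      by (simp add: transv_zero_vec d'_def)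
    ultimately show ?thesis by simp
  next
    case False
    then have "d = unit_vec n i"
      using less.prems(1) i by (auto simp: unit_vec_def list_eq_iff_nth_eq nth_list_update)
    then show ?thesis using pair_count_unit_vec[OF i(1)] by simp
  qed
qed

lemma pair_count_distinct:
  assumes "length x = n" "length y = n" "x \<noteq> y"
  shows "pair_count n k x y = pair_count n k (zero_vec n) (unit_vec n 0)"
  using assms pair_count_shift_to_zero pair_count_zero_nonzero vadd_eq_zero_vec_iff
  by (metis length_vadd min.idem)

section \<open>Negative correlation by double counting\<close>

lemma sum_card_eq_sum_card_containing:
  assumes "finite C" "finite F" "\<And>V. V \<in> F \<Longrightarrow> V \<subseteq> C"
  shows "(\<Sum>V\<in>F. card V) = (\<Sum>x\<in>C. card {V\<in>F. x \<in> V})"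
proof -
  have "(\<Sum>V\<in>F. card V) = (\<Sum>V\<in>F. \<Sum>x\<in>C. of_bool (x \<in> V))"
    using assms by (intro sum.cong refl) (simp add: Int_absorb1)
  also have "\<dots> = (\<Sum>x\<in>C. \<Sum>V\<in>F. of_bool (x \<in> V))" by (rule sum.swap)
  also have "\<dots> = (\<Sum>x\<in>C. card {V\<in>F. x \<in> V})"
    using assms(2) by (simp add: Collect_conj_eq Int_commute)
  finally show ?thesis .
qed

lemma sum_card_sq_eq_sum_card_containing_pair:
  assumes "finite C" "finite F" "\<And>V. V \<in> F \<Longrightarrow> V \<subseteq> C"
  shows "(\<Sum>V\<in>F. card V ^ 2) = (\<Sum>x\<in>C. \<Sum>y\<in>C. card {V\<in>F. x \<in> V \<and> y \<in> V})"
proof -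
  have "card V ^ 2 = (\<Sum>x\<in>C. \<Sum>y\<in>C. of_bool (x \<in> V \<and> y \<in> V))" if "V \<in> F" for V
  proof -
    have "card V ^ 2 = (\<Sum>x\<in>C. of_bool (x \<in> V)) * (\<Sum>y\<in>C. of_bool (y \<in> V))"
      using assms(1) assms(3)[OF that] by (simp add: Int_absorb1 power2_eq_square)
    also have "\<dots> = (\<Sum>x\<in>C. \<Sum>y\<in>C. of_bool (x \<in> V \<and> y \<in> V))"
      by (simp add: sum_product of_bool_conj)
    finally show ?thesis .
  qed
  then have "(\<Sum>V\<in>F. card V ^ 2) = (\<Sum>V\<in>F. \<Sum>x\<in>C. \<Sum>y\<in>C. of_bool (x \<in> V \<and> y \<in> V))"
    by (rule sum.cong[OF refl])
  also have "\<dots> = (\<Sum>x\<in>C. \<Sum>y\<in>C. \<Sum>V\<in>F. of_bool (x \<in> V \<and> y \<in> V))"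
    by (subst sum.swap) (simp add: sum.swap[of _ F])
  also have "\<dots> = (\<Sum>x\<in>C. \<Sum>y\<in>C. card {V\<in>F. x \<in> V \<and> y \<in> V})"
    using assms(2) by (simp add: Collect_conj_eq Int_commute)
  finally show ?thesis .
qed

text \<open>The two moment identities of a family of f sets of equal size s in an N-point space, where
  \<alpha> counts members through a point and \<beta> members through a pair of distinct points.\<close>
lemma pair_incidence_le_square:
  fixes f s N \<alpha> \<beta> :: real
  assumes first: "f * s = N * \<alpha>" and second: "f * s\<^sup>2 = N * \<alpha> + N * (N - 1) * \<beta>"
    and "0 \<le> s" "s \<le> N" "1 < N"
  shows "\<beta> * f \<le> \<alpha>\<^sup>2"
proof -
  have "N * (N - 1) * \<beta> = f * s\<^sup>2 - f * s"
    using first second by linarith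
  also have "\<dots> = f * s * (s - 1)"
    by (simp add: power2_eq_square algebra_simps)
  finally have pairs: "N * (N - 1) * \<beta> = f * s * (s - 1)" .
  have "N\<^sup>2 * (N - 1) * (\<beta> * f) = N * f * (N * (N - 1) * \<beta>)"
    by (simp add: power2_eq_square algebra_simps)
  also have "\<dots> = N * f\<^sup>2 * s * (s - 1)"
    unfolding pairs by (simp add: power2_eq_square algebra_simps)
  also have "\<dots> \<le> N * f\<^sup>2 * s * (s - 1) + f\<^sup>2 * s * (N - s)"
    using assms(3,4) by simp
  also have "\<dots> = (f * s)\<^sup>2 * (N - 1)"
    by (simp add: power2_eq_square algebra_simps)
  also have "\<dots> = N\<^sup>2 * (N - 1) * \<alpha>\<^sup>2"
    by (simp add: first power2_eq_square algebra_simps)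
  finally show ?thesis
    using \<open>1 < N\<close> by (simp add: mult_le_cancel_left_pos)
qed

lemma real_card_flats_member: "V \<in> flats n k \<Longrightarrow> real (card V) = 2 ^ n / 2 ^ k"
proof -
  assume "V \<in> flats n k"
  then have "real (2 ^ k * card V) = real (2 ^ n)" by (simp only: card_flats_member)
  then show ?thesis by (simp add: field_simps)
qed

lemma sum_card_flats:
  "(\<Sum>V\<in>flats n k. real (card V)) = 2 ^ n * real (pair_count n k (zero_vec n) (zero_vec n))"
proof -
  have "(\<Sum>V\<in>flats n k. card V) = (\<Sum>x\<in>cube n. card {V\<in>flats n k. x \<in> V})"
    using finite_flats flats_subset_cube by (intro sum_card_eq_sum_card_containing) auto
  also have "\<dots> = (\<Sum>x\<in>cube n. pair_count n k (zero_vec n) (zero_vec n))"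
  proof (rule sum.cong[OF refl])
    fix x assume "x \<in> cube n"
    then show "card {V\<in>flats n k. x \<in> V} = pair_count n k (zero_vec n) (zero_vec n)"
      using pair_count_diag[of x n k] by (simp add: pair_count_def)
  qed
  finally show ?thesis by (simp add: card_cube flip: of_nat_sum)
qed

lemma sum_pair_count_row:
  assumes "length x = n"
  shows "(\<Sum>y\<in>cube n. real (pair_count n k x y)) =
    real (pair_count n k (zero_vec n) (zero_vec n)) + (2 ^ n - 1) * real (pair_count n k (zero_vec n) (unit_vec n 0))"
proof -
  have "(\<Sum>y\<in>cube n. real (pair_count n k x y))
      = pair_count n k x x + (\<Sum>y\<in>cube n - {x}. real (pair_count n k x y))"
    using assms by (simp add: sum.remove)
  also have "(\<Sum>y\<in>cube n - {x}. real (pair_count n k x y))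
      = (\<Sum>y\<in>cube n - {x}. real (pair_count n k (zero_vec n) (unit_vec n 0)))"
    using assms by (intro sum.cong refl) (auto simp: pair_count_distinct)
  finally show ?thesis
    using assms by (simp add: card_cube pair_count_diag[OF assms] of_nat_diff)
qed

lemma sum_card_sq_flats:
  "(\<Sum>V\<in>flats n k. real (card V) ^ 2) =
    2 ^ n * (real (pair_count n k (zero_vec n) (zero_vec n)) + (2 ^ n - 1) * real (pair_count n k (zero_vec n) (unit_vec n 0)))"
proof -
  have "(\<Sum>V\<in>flats n k. card V ^ 2) = (\<Sum>x\<in>cube n. \<Sum>y\<in>cube n. pair_count n k x y)"
    unfolding pair_count_def using finite_flats flats_subset_cube
    by (intro sum_card_sq_eq_sum_card_containing_pair) auto
  then have "real (\<Sum>V\<in>flats n k. card V ^ 2) = real (\<Sum>x\<in>cube n. \<Sum>y\<in>cube n. pair_count n k x y)"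
    by (rule arg_cong)
  then have "(\<Sum>V\<in>flats n k. real (card V) ^ 2) = (\<Sum>x\<in>cube n. \<Sum>y\<in>cube n. real (pair_count n k x y))"
    by (simp add: of_nat_sum)
  also have "\<dots> = (\<Sum>x\<in>cube n. pair_count n k (zero_vec n) (zero_vec n)
      + (2 ^ n - 1) * real (pair_count n k (zero_vec n) (unit_vec n 0)))"
    by (intro sum.cong refl sum_pair_count_row) simp
  finally show ?thesis by (simp add: card_cube)
qed

lemma pair_count_neg_corr:
  assumes "length x = n" "length y = n" "x \<noteq> y"
  shows "real (pair_count n k x y) * card (flats n k) \<le> real (pair_count n k x x) * pair_count n k y y"
proof -
  define N :: real where "N = 2 ^ n"
  define s :: real where "s = 2 ^ n / 2 ^ k"
  define f where "f = real (card (flats n k))"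
  define \<alpha> where "\<alpha> = real (pair_count n k (zero_vec n) (zero_vec n))"
  define \<beta> where "\<beta> = real (pair_count n k (zero_vec n) (unit_vec n 0))"
  have "n \<noteq> 0" using assms by auto
  then have "1 < N" by (simp add: N_def)
  have "s \<le> N" by (simp add: s_def N_def field_simps)
  have card_eq: "real (card V) = s" if "V \<in> flats n k" for V
    using real_card_flats_member[OF that] by (simp add: s_def)
  have "f * s = N * \<alpha>"
    using sum_card_flats[of n k] by (simp add: card_eq f_def N_def \<alpha>_def)
  moreover have "f * s\<^sup>2 = N * \<alpha> + N * (N - 1) * \<beta>"
    using sum_card_sq_flats[of n k] by (simp add: card_eq f_def N_def \<alpha>_def \<beta>_def algebra_simps)
  ultimately have "\<beta> * f \<le> \<alpha>\<^sup>2"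
    using \<open>s \<le> N\<close> \<open>1 < N\<close> by (intro pair_incidence_le_square) (auto simp: s_def)
  moreover have "pair_count n k x y = pair_count n k (zero_vec n) (unit_vec n 0)"
    using assms by (rule pair_count_distinct)
  ultimately show ?thesis
    using pair_count_diag[OF assms(1)] pair_count_diag[OF assms(2)]
    by (simp add: \<alpha>_def \<beta>_def f_def power2_eq_square)
qed

section \<open>Second moment of the number of uncovered points\<close>

lemma integrable_measure_pmf_indicator: "integrable (measure_pmf Q) (indicator A :: _ \<Rightarrow> real)"
  by (rule integrable_real_indicator) (simp_all add: measure_pmf.emeasure_finite less_top[symmetric])

lemma integrable_Pi_pmf_prod_indicator:
  "integrable (measure_pmf (Pi_pmf {..<m::nat} d (\<lambda>_. Q))) (\<lambda>V. \<Prod>j<m. indicator A (V j) :: real)"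
  by (rule integrable_prod_Pi_pmf) (simp_all add: integrable_measure_pmf_indicator)

lemma expectation_Pi_pmf_prod_indicator:
  "measure_pmf.expectation (Pi_pmf {..<m::nat} d (\<lambda>_. Q)) (\<lambda>V. \<Prod>j<m. indicator A (V j))
    = measure_pmf.prob Q A ^ m"
  by (subst expectation_prod_Pi_pmf) (simp_all add: integrable_measure_pmf_indicator)

lemma prod_indicator_uncovered:
  "(\<Prod>j<m::nat. indicator {W. x \<notin> W} (V j) :: real) = of_bool (x \<notin> (\<Union>j<m. V j))"
  by (induction m) (auto simp: lessThan_Suc)

lemma card_uncovered_eq_sum_prod_indicator:
  assumes "finite C"
  shows "real (card (C - (\<Union>j<m::nat. V j))) = (\<Sum>x\<in>C. \<Prod>j<m. indicator {W. x \<notin> W} (V j))"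
proof -
  have "(\<Sum>x\<in>C. \<Prod>j<m. indicator {W. x \<notin> W} (V j)) = (\<Sum>x\<in>C. of_bool (x \<notin> (\<Union>j<m. V j)) :: real)"
    by (simp only: prod_indicator_uncovered)
  also have "\<dots> = real (card (C \<inter> {x. x \<notin> (\<Union>j<m. V j)}))"
    using assms by simp
  also have "C \<inter> {x. x \<notin> (\<Union>j<m. V j)} = C - (\<Union>j<m. V j)" by blast
  finally show ?thesis ..
qed

lemma uncovered_count_second_moment:
  fixes Q :: "'a set pmf" and m :: nat and d :: "'a set"
  assumes "finite C"
    and neg_corr: "\<And>x y. x \<in> C \<Longrightarrow> y \<in> C \<Longrightarrow> x \<noteq> y \<Longrightarrow>
      measure_pmf.prob Q {W. x \<notin> W \<and> y \<notin> W} \<le> measure_pmf.prob Q {W. x \<notin> W} * measure_pmf.prob Q {W. y \<notin> W}"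
  defines "P \<equiv> Pi_pmf {..<m} d (\<lambda>_. Q)" and "Z \<equiv> \<lambda>V. real (card (C - (\<Union>j<m. V j)))"
  shows "measure_pmf.expectation P (\<lambda>V. Z V ^ 2) \<le> measure_pmf.expectation P Z + (measure_pmf.expectation P Z)\<^sup>2"
proof -
  define p where "p x = measure_pmf.prob Q {W. x \<notin> W}" for x
  define q where "q x y = measure_pmf.prob Q {W. x \<notin> W \<and> y \<notin> W}" for x y
  have EZ: "measure_pmf.expectation P Z = (\<Sum>x\<in>C. p x ^ m)"
    unfolding Z_def P_def card_uncovered_eq_sum_prod_indicator[OF \<open>finite C\<close>]
    by (simp add: Bochner_Integration.integral_sum integrable_Pi_pmf_prod_indicator
        expectation_Pi_pmf_prod_indicator p_def)
  have "Z V ^ 2 = (\<Sum>x\<in>C. \<Sum>y\<in>C. \<Prod>j<m. indicator {W. x \<notin> W \<and> y \<notin> W} (V j))" for V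
  proof -
    have "Z V ^ 2 = (\<Sum>x\<in>C. \<Sum>y\<in>C. (\<Prod>j<m. indicator {W. x \<notin> W} (V j)) * (\<Prod>j<m. indicator {W. y \<notin> W} (V j)))"
      unfolding Z_def card_uncovered_eq_sum_prod_indicator[OF \<open>finite C\<close>] power2_eq_square
      by (rule sum_product)
    then show ?thesis
      by (simp add: prod.distrib[symmetric] indicator_def of_bool_conj)
  qed
  then have EZ2: "measure_pmf.expectation P (\<lambda>V. Z V ^ 2) = (\<Sum>x\<in>C. \<Sum>y\<in>C. q x y ^ m)"
    unfolding P_def
    by (simp add: Bochner_Integration.integral_sum integrable_Pi_pmf_prod_indicator
        expectation_Pi_pmf_prod_indicator q_def)
  have pointwise: "q x y ^ m \<le> of_bool (x = y) * p x ^ m + p x ^ m * p y ^ m" if "x \<in> C" "y \<in> C" for x y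
  proof (cases "x = y")
    case True
    then show ?thesis by (simp add: p_def q_def)
  next
    case False
    then have "q x y ^ m \<le> (p x * p y) ^ m"
      using neg_corr[OF that False] by (intro power_mono) (simp_all add: p_def q_def)
    with False show ?thesis by (simp add: power_mult_distrib)
  qed
  have "measure_pmf.expectation P (\<lambda>V. Z V ^ 2) \<le> (\<Sum>x\<in>C. \<Sum>y\<in>C. of_bool (x = y) * p x ^ m + p x ^ m * p y ^ m)"
    unfolding EZ2 by (intro sum_mono pointwise)
  also have "\<dots> = (\<Sum>x\<in>C. p x ^ m) + (\<Sum>x\<in>C. p x ^ m)\<^sup>2"
    using \<open>finite C\<close> by (simp add: sum.distrib power2_eq_square sum_product)
  finally show ?thesis unfolding EZ .
qed

lemma real_card_flats_avoiding:
  "real (card (flats n k \<inter> {W. x \<notin> W \<and> y \<notin> W})) =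
    real (card (flats n k)) - pair_count n k x x - pair_count n k y y + pair_count n k x y"
proof -
  have "real (card (flats n k \<inter> {W. x \<notin> W \<and> y \<notin> W})) = (\<Sum>W\<in>flats n k. of_bool (x \<notin> W \<and> y \<notin> W))"
    by (simp add: finite_flats)
  also have "\<dots> = (\<Sum>W\<in>flats n k. 1 - of_bool (x \<in> W) - of_bool (y \<in> W) + of_bool (x \<in> W \<and> y \<in> W))"
    by (intro sum.cong refl) auto
  also have "\<dots> = real (card (flats n k)) - pair_count n k x x - pair_count n k y y + pair_count n k x y"
    by (simp add: sum.distrib sum_subtractf finite_flats pair_count_def Collect_conj_eq Int_commute)
  finally show ?thesis .
qed

lemma prob_uncovered_flats_neg_corr:
  assumes "k \<le> n" "length x = n" "length y = n" "x \<noteq> y"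
  defines "Q \<equiv> pmf_of_set (flats n k)"
  shows "measure_pmf.prob Q {W. x \<notin> W \<and> y \<notin> W} \<le> measure_pmf.prob Q {W. x \<notin> W} * measure_pmf.prob Q {W. y \<notin> W}"
proof -
  define f where "f = real (card (flats n k))"
  define a where "a z = real (pair_count n k z z)" for z
  define b where "b = real (pair_count n k x y)"
  have "0 < f" using flats_nonempty[OF assms(1)] finite_flats by (simp add: f_def card_gt_0_iff)
  have prob: "measure_pmf.prob Q {W. z \<notin> W \<and> w \<notin> W} = (f - a z - a w + pair_count n k z w) / f" for z w
    using flats_nonempty[OF assms(1)] finite_flats
    by (simp add: Q_def measure_pmf_of_set real_card_flats_avoiding f_def a_def)
  have "b * f \<le> a x * a y"
    using pair_count_neg_corr[OF assms(2-4)] by (simp add: a_def b_def f_def)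
  then have "(f - a x - a y + b) * f \<le> (f - a x) * (f - a y)"
    by (simp add: algebra_simps)
  then have "(f - a x - a y + b) / f \<le> ((f - a x) / f) * ((f - a y) / f)"
    using \<open>0 < f\<close> by (simp add: field_simps)
  then show ?thesis
    using prob[of x y] prob[of x x] prob[of y y] by (simp add: a_def b_def)
qed

lemma second_moment_uncovered_flats:
  assumes "k \<le> n"
  shows "measure_pmf.expectation (P_unif n k m) (\<lambda>V. real (Zcount n m V) ^ 2) \<le>
    measure_pmf.expectation (P_unif n k m) (\<lambda>V. real (Zcount n m V)) +
    (measure_pmf.expectation (P_unif n k m) (\<lambda>V. real (Zcount n m V)))\<^sup>2"
  unfolding P_unif_def Zcount_def
  by (rule uncovered_count_second_moment) (use prob_uncovered_flats_neg_corr[OF assms] in auto)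

theorem mainTheorem2:
  fixes k :: nat and \<Delta> :: real
  assumes "k \<ge> 1" and "\<Delta> > 0"
  shows "\<exists>eps :: nat \<Rightarrow> real. eps \<longlonglongrightarrow> 0 \<and>
    (\<forall>n\<ge>k. let m = nat \<lfloor>\<Delta> * real n\<rfloor>;
                 EZ = measure_pmf.expectation (P_unif n k m) (\<lambda>V. real (Zcount n m V));
                 EZ2 = measure_pmf.expectation (P_unif n k m) (\<lambda>V. real (Zcount n m V) ^ 2)
             in EZ2 / EZ ^ 2 \<le> 1 + eps n + 1 / EZ)"
proof (intro exI[of _ "\<lambda>_. 0"] conjI allI impI)
  fix n assume "k \<le> n"
  define m where "m = nat \<lfloor>\<Delta> * real n\<rfloor>"
  define EZ where "EZ = measure_pmf.expectation (P_unif n k m) (\<lambda>V. real (Zcount n m V))"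
  define EZ2 where "EZ2 = measure_pmf.expectation (P_unif n k m) (\<lambda>V. real (Zcount n m V) ^ 2)"
  have "EZ2 \<le> EZ + EZ\<^sup>2"
    unfolding EZ_def EZ2_def by (rule second_moment_uncovered_flats[OF \<open>k \<le> n\<close>])
  moreover have "EZ \<ge> 0"
    unfolding EZ_def by (rule Bochner_Integration.integral_nonneg) simp
  ultimately have "EZ2 / EZ\<^sup>2 \<le> 1 + 0 + 1 / EZ"
    by (cases "EZ = 0") (simp_all add: field_simps power2_eq_square)
  then show "let m = nat \<lfloor>\<Delta> * real n\<rfloor>;
                 EZ = measure_pmf.expectation (P_unif n k m) (\<lambda>V. real (Zcount n m V));
                 EZ2 = measure_pmf.expectation (P_unif n k m) (\<lambda>V. real (Zcount n m V) ^ 2)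
             in EZ2 / EZ ^ 2 \<le> 1 + 0 + 1 / EZ"
    by (simp add: Let_def m_def EZ_def EZ2_def)
qed simp

end
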